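(* Let $p>1$ and $x\in(0,1)$, and put $z=\left(\frac{x^p}{1+x^p}\right)^{1/p}$. Then $$z\left(1+\frac{\log(1+x^p)}{1+p}\right)<\operatorname{arsinh}_p x<z\left(1+\frac1p\log(1+x^p)\right)$$ and $$x\left(1-\frac{1}{1+p}\log(1-x^p)\right)<\operatorname{artanh}_p x<x\left(1-\frac1p\log(1-x^p)\right).$$
   Context: For $p>1$ and $x\in(0,1)$: $\operatorname{arsinh}_p x=\int_0^x(1+t^p)^{-1/p}\,dt$ and $\operatorname{artanh}_p x=\int_0^x(1-t^p)^{-1}\,dt$. *)

theory Defs
  imports "HOL-Analysis.Analysis"
begin

definition arsinh_p :: "real \<Rightarrow> real \<Rightarrow> real" where
  "arsinh_p p x = integral {0..x} (\<lambda>t. (1 + t powr p) powr (-1 / p))"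

definition artanh_p :: "real \<Rightarrow> real \<Rightarrow> real" where
  "artanh_p p x = integral {0..x} (\<lambda>t. 1 / (1 - t powr p))"

end

theory Submission
  imports Defs
begin

text \<open>Since \<open>z = x (1 + x^p)^(-1/p)\<close>, each bound is a function \<open>F\<close> with \<open>F 0 = 0\<close>, so it suffices to compare \<open>F'\<close> with the
  integrand on \<open>(0, x)\<close>. For \<open>F y = y (1 + y^p)^(-1/p) (1 + c ln (1 + y^p))\<close> the difference
  \<open>F' - (1 + y^p)^(-1/p)\<close> has the sign of \<open>c (ln (1 + u) + p u) - u\<close> with \<open>u = y^p\<close>; for
  \<open>F y = y (1 - c ln (1 - y^p))\<close> the difference \<open>F' - 1 / (1 - y^p)\<close> equals
  \<open>c (p v - ln (1 - u)) - v\<close> with \<open>v = u / (1 - u)\<close>. Taking \<open>c = 1 / (1 + p)\<close> the sign is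
  negative by \<open>ln (1 + u) < u\<close> and \<open>- ln (1 - u) < v\<close>; taking \<open>c = 1 / p\<close> it is positive
  because \<open>ln (1 + u) > 0 > ln (1 - u)\<close>.\<close>

lemma diff_less_integral_of_deriv_less:
  fixes f F F' :: "real \<Rightarrow> real"
  assumes "a < b" and f: "continuous_on {a..b} f" and "continuous_on {a..b} F"
    and F': "\<And>y. a < y \<Longrightarrow> y < b \<Longrightarrow> (F has_real_derivative F' y) (at y)"
    and less: "\<And>y. a < y \<Longrightarrow> y < b \<Longrightarrow> F' y < f y"
  shows "F b - F a < integral {a..b} f"
proof -
  define D where "D y = integral {a..y} f - F y" for y
  have "continuous_on {a..b} D"
    unfolding D_def by (intro continuous_intros indefinite_integral_continuous_1
        integrable_continuous_real assms)
  moreover have D': "(D has_real_derivative f y - F' y) (at y)" if "a < y" "y < b" for y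
  proof -
    have "((\<lambda>u. integral {a..u} f) has_vector_derivative f y) (at y)"
      using integral_has_vector_derivative[OF f, of y] that at_within_interior[of y "{a..b}"]
      by auto
    then show ?thesis
      unfolding D_def has_real_derivative_iff_has_vector_derivative[symmetric]
      by (intro derivative_intros F' that)
  qed
  ultimately obtain l y where y: "a < y" "y < b" "DERIV D y :> l" "D b - D a = (b - a) * l"
    using MVT[OF \<open>a < b\<close>] real_differentiable_def by blast
  have "l = f y - F' y" using DERIV_unique[OF y(3) D'[OF y(1,2)]] .
  then have "D b - D a > 0" using y less[OF y(1,2)] \<open>a < b\<close> by simp
  then show ?thesis by (simp add: D_def)
qed

lemma integral_less_diff_of_deriv_greater:
  fixes f F F' :: "real \<Rightarrow> real"
  assumes "a < b" and "continuous_on {a..b} f" and "continuous_on {a..b} F"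
    and "\<And>y. a < y \<Longrightarrow> y < b \<Longrightarrow> (F has_real_derivative F' y) (at y)"
    and "\<And>y. a < y \<Longrightarrow> y < b \<Longrightarrow> f y < F' y"
  shows "integral {a..b} f < F b - F a"
proof -
  have "(\<lambda>y. - F y) b - (\<lambda>y. - F y) a < integral {a..b} (\<lambda>y. - f y)"
    using assms by (intro diff_less_integral_of_deriv_less[where F' = "\<lambda>y. - F' y"])
      (auto intro: continuous_intros derivative_intros)
  then show ?thesis by (simp add: integral_neg)
qed

lemma minus_ln_one_minus_less:
  fixes u :: real
  assumes "0 < u" "u < 1"
  shows "- ln (1 - u) < u / (1 - u)"
proof -
  have "ln (1 + u / (1 - u)) < u / (1 - u)"
    using assms by (intro ln_add_one_self_less_self) auto
  moreover have "1 + u / (1 - u) = inverse (1 - u)" using assms by (simp add: field_simps)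
  ultimately show ?thesis using assms by (simp add: ln_inverse)
qed

definition arsinh_p_approx :: "real \<Rightarrow> real \<Rightarrow> real \<Rightarrow> real" where
  "arsinh_p_approx p c y = y * (1 + y powr p) powr (-1 / p) * (1 + c * ln (1 + y powr p))"

definition artanh_p_approx :: "real \<Rightarrow> real \<Rightarrow> real \<Rightarrow> real" where
  "artanh_p_approx p c y = y * (1 - c * ln (1 - y powr p))"

lemma continuous_on_powr_const:
  fixes p :: real
  assumes "p > 0"
  shows "continuous_on {0..x} (\<lambda>y. y powr p)"
  using assms by (intro continuous_on_powr') (auto intro: continuous_intros)

lemma continuous_on_arsinh_p_integrand:
  fixes p :: real
  assumes "p > 0"
  shows "continuous_on {0..x} (\<lambda>y. (1 + y powr p) powr (-1 / p))"
  using assms by (intro continuous_on_powr' continuous_on_add continuous_on_const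
      continuous_on_powr_const) (auto simp: add_pos_nonneg less_imp_neq[symmetric])

lemma continuous_on_arsinh_p_approx:
  fixes p :: real
  assumes "p > 0"
  shows "continuous_on {0..x} (arsinh_p_approx p c)"
proof -
  have "continuous_on {0..x} (\<lambda>y. ln (1 + y powr p))"
    using assms by (intro continuous_on_ln continuous_intros continuous_on_powr_const)
      (auto simp: add_pos_nonneg less_imp_neq[symmetric])
  then show ?thesis
    unfolding arsinh_p_approx_def[abs_def] using continuous_on_arsinh_p_integrand[OF assms]
    by (intro continuous_on_mult continuous_on_add continuous_on_const continuous_on_id)
qed

lemma continuous_on_artanh_p_integrand:
  fixes p :: real
  assumes "p > 0" "x < 1"
  shows "continuous_on {0..x} (\<lambda>y. 1 / (1 - y powr p))"
  using assms powr_less_mono2[of p _ 1]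
  by (intro continuous_intros continuous_on_powr_const) fastforce+

lemma continuous_on_artanh_p_approx:
  fixes p :: real
  assumes "p > 0" "x < 1"
  shows "continuous_on {0..x} (artanh_p_approx p c)"
proof -
  have "continuous_on {0..x} (\<lambda>y. ln (1 - y powr p))"
    using assms powr_less_mono2[of p _ 1]
    by (intro continuous_on_ln continuous_intros continuous_on_powr_const) fastforce+
  then show ?thesis
    unfolding artanh_p_approx_def[abs_def]
    by (intro continuous_on_mult continuous_on_diff continuous_on_const continuous_on_id)
qed

lemma has_real_derivative_arsinh_p_approx:
  fixes p c y :: real
  assumes "p > 0" "y > 0"
  shows "(arsinh_p_approx p c has_real_derivative
      (1 + y powr p) powr (-1 / p)
      + (1 + y powr p) powr (-1 / p) * (c * (ln (1 + y powr p) + p * y powr p) - y powr p)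
        / (1 + y powr p)) (at y)"
proof -
  define u where "u = y powr p"
  define W where "W = (1 + u) powr (-1 / p)"
  define L where "L = ln (1 + u)"
  have pos: "1 + u > 0" by (simp add: u_def add_pos_nonneg)
  have u': "p * y powr (p - 1) = p * u / y"
    using assms by (simp add: u_def powr_diff)
  have W': "((\<lambda>y. (1 + y powr p) powr (-1 / p)) has_real_derivative - W * u / (y * (1 + u))) (at y)"
  proof -
    have "(1 + u) powr (-1 / p - 1) = W / (1 + u)"
      using pos by (simp add: W_def powr_diff)
    then show ?thesis
      using assms pos u' by (auto intro!: derivative_eq_intros simp: u_def[symmetric])
  qed
  have L': "((\<lambda>y. ln (1 + y powr p)) has_real_derivative p * u / (y * (1 + u))) (at y)"
    using assms pos u' by (auto intro!: derivative_eq_intros simp: u_def[symmetric])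
  have "((\<lambda>y. y * (1 + y powr p) powr (-1 / p) * (1 + c * ln (1 + y powr p))) has_real_derivative
      (1 * W + - W * u / (y * (1 + u)) * y) * (1 + c * L) + (0 + c * (p * u / (y * (1 + u)))) * (y * W))
    (at y)"
    using DERIV_mult[OF DERIV_mult[OF DERIV_ident W'] DERIV_add[OF DERIV_const DERIV_cmult[OF L']]]
    by (simp only: W_def L_def u_def)
  moreover have "(1 * W + - W * u / (y * (1 + u)) * y) * (1 + c * L) + (0 + c * (p * u / (y * (1 + u)))) * (y * W)
      = W + W * (c * (L + p * u) - u) / (1 + u)"
  proof -
    have "- W * u / (y * (1 + u)) * y = - W * u / (1 + u)"
      and "c * (p * u / (y * (1 + u))) * (y * W) = W * c * p * u / (1 + u)"
      using assms by simp_all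
    moreover have "(W - W * u / (1 + u)) * (1 + c * L) + W * c * p * u / (1 + u)
        = W + W * (c * (L + p * u) - u) / (1 + u)"
      using pos by (simp add: divide_simps) (simp add: algebra_simps)
    ultimately show ?thesis by simp
  qed
  ultimately show ?thesis by (simp add: arsinh_p_approx_def[abs_def] W_def L_def u_def)
qed

lemma has_real_derivative_artanh_p_approx:
  fixes p c y :: real
  assumes "p > 0" "0 < y" "y < 1"
  shows "(artanh_p_approx p c has_real_derivative
      1 / (1 - y powr p)
      + (c * (p * y powr p / (1 - y powr p) - ln (1 - y powr p)) - y powr p / (1 - y powr p)))
    (at y)"
proof -
  define u where "u = y powr p"
  define L where "L = ln (1 - u)"
  have "u < 1" using powr_less_mono2[of p y 1] assms by (simp add: u_def)
  have L': "((\<lambda>y. ln (1 - y powr p)) has_real_derivative - (p * u / (y * (1 - u)))) (at y)"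
  proof -
    have "p * y powr (p - 1) = p * u / y" using assms by (simp add: u_def powr_diff)
    then show ?thesis
      using assms \<open>u < 1\<close> by (auto intro!: derivative_eq_intros simp: u_def[symmetric])
  qed
  have "((\<lambda>y. y * (1 - c * ln (1 - y powr p))) has_real_derivative
      1 * (1 - c * L) + (0 - c * - (p * u / (y * (1 - u)))) * y) (at y)"
    using DERIV_mult[OF DERIV_ident DERIV_diff[OF DERIV_const DERIV_cmult[OF L']]]
    by (simp only: L_def u_def)
  moreover have "1 * (1 - c * L) + (0 - c * - (p * u / (y * (1 - u)))) * y
      = 1 / (1 - u) + (c * (p * u / (1 - u) - L) - u / (1 - u))"
  proof -
    have "(0 - c * - (p * u / (y * (1 - u)))) * y = c * p * u / (1 - u)" using assms by simp
    moreover have "1 / (1 - u) = 1 + u / (1 - u)" using \<open>u < 1\<close> by (simp add: field_simps)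
    ultimately show ?thesis by (simp add: algebra_simps)
  qed
  ultimately show ?thesis by (simp add: artanh_p_approx_def[abs_def] L_def u_def)
qed

lemma arsinh_p_approx_less_arsinh_p:
  fixes p c x :: real
  assumes "p > 0" "x > 0" and c: "\<And>u. 0 < u \<Longrightarrow> c * (ln (1 + u) + p * u) < u"
  shows "arsinh_p_approx p c x < arsinh_p p x"
proof -
  have "arsinh_p_approx p c x - arsinh_p_approx p c 0 < arsinh_p p x"
    unfolding arsinh_p_def
  proof (rule diff_less_integral_of_deriv_less[OF \<open>x > 0\<close> _ _
        has_real_derivative_arsinh_p_approx[OF \<open>p > 0\<close>]])
    fix y :: real assume "0 < y" "y < x"
    have "0 < 1 + y powr p" by (simp add: add_pos_nonneg)
    with c[of "y powr p"] \<open>0 < y\<close> show "(1 + y powr p) powr (-1 / p)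
      + (1 + y powr p) powr (-1 / p) * (c * (ln (1 + y powr p) + p * y powr p) - y powr p)
        / (1 + y powr p) < (1 + y powr p) powr (-1 / p)"
      by (simp add: mult_pos_neg divide_neg_pos)
  qed (use continuous_on_arsinh_p_integrand continuous_on_arsinh_p_approx \<open>p > 0\<close> in auto)
  then show ?thesis by (simp add: arsinh_p_approx_def)
qed

lemma arsinh_p_less_arsinh_p_approx:
  fixes p c x :: real
  assumes "p > 0" "x > 0" and c: "\<And>u. 0 < u \<Longrightarrow> u < c * (ln (1 + u) + p * u)"
  shows "arsinh_p p x < arsinh_p_approx p c x"
proof -
  have "arsinh_p p x < arsinh_p_approx p c x - arsinh_p_approx p c 0"
    unfolding arsinh_p_def
  proof (rule integral_less_diff_of_deriv_greater[OF \<open>x > 0\<close> _ _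
        has_real_derivative_arsinh_p_approx[OF \<open>p > 0\<close>]])
    fix y :: real assume "0 < y" "y < x"
    have "0 < 1 + y powr p" by (simp add: add_pos_nonneg)
    with c[of "y powr p"] \<open>0 < y\<close> show "(1 + y powr p) powr (-1 / p) < (1 + y powr p) powr (-1 / p)
      + (1 + y powr p) powr (-1 / p) * (c * (ln (1 + y powr p) + p * y powr p) - y powr p)
        / (1 + y powr p)"
      by simp
  qed (use continuous_on_arsinh_p_integrand continuous_on_arsinh_p_approx \<open>p > 0\<close> in auto)
  then show ?thesis by (simp add: arsinh_p_approx_def)
qed

lemma artanh_p_approx_less_artanh_p:
  fixes p c x :: real
  assumes "p > 0" "0 < x" "x < 1"
    and c: "\<And>u. 0 < u \<Longrightarrow> u < 1 \<Longrightarrow> c * (p * u / (1 - u) - ln (1 - u)) < u / (1 - u)"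
  shows "artanh_p_approx p c x < artanh_p p x"
proof -
  have "artanh_p_approx p c x - artanh_p_approx p c 0 < artanh_p p x"
    unfolding artanh_p_def
  proof (rule diff_less_integral_of_deriv_less[OF \<open>x > 0\<close> _ _
        has_real_derivative_artanh_p_approx[OF \<open>p > 0\<close>]])
    fix y :: real assume "0 < y" "y < x"
    then show "y < 1" using \<open>x < 1\<close> by simp
    have "y powr p < 1" using powr_less_mono2[of p y 1] \<open>p > 0\<close> \<open>0 < y\<close> \<open>y < 1\<close> by simp
    with c[of "y powr p"] \<open>0 < y\<close> show "1 / (1 - y powr p)
      + (c * (p * y powr p / (1 - y powr p) - ln (1 - y powr p)) - y powr p / (1 - y powr p))
      < 1 / (1 - y powr p)"
      by simp
  qed (use continuous_on_artanh_p_integrand continuous_on_artanh_p_approx assms in auto)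
  then show ?thesis by (simp add: artanh_p_approx_def)
qed

lemma artanh_p_less_artanh_p_approx:
  fixes p c x :: real
  assumes "p > 0" "0 < x" "x < 1"
    and c: "\<And>u. 0 < u \<Longrightarrow> u < 1 \<Longrightarrow> u / (1 - u) < c * (p * u / (1 - u) - ln (1 - u))"
  shows "artanh_p p x < artanh_p_approx p c x"
proof -
  have "artanh_p p x < artanh_p_approx p c x - artanh_p_approx p c 0"
    unfolding artanh_p_def
  proof (rule integral_less_diff_of_deriv_greater[OF \<open>x > 0\<close> _ _
        has_real_derivative_artanh_p_approx[OF \<open>p > 0\<close>]])
    fix y :: real assume "0 < y" "y < x"
    then show "y < 1" using \<open>x < 1\<close> by simp
    have "y powr p < 1" using powr_less_mono2[of p y 1] \<open>p > 0\<close> \<open>0 < y\<close> \<open>y < 1\<close> by simp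
    with c[of "y powr p"] \<open>0 < y\<close> show "1 / (1 - y powr p) < 1 / (1 - y powr p)
      + (c * (p * y powr p / (1 - y powr p) - ln (1 - y powr p)) - y powr p / (1 - y powr p))"
      by simp
  qed (use continuous_on_artanh_p_integrand continuous_on_artanh_p_approx assms in auto)
  then show ?thesis by (simp add: artanh_p_approx_def)
qed

lemma arsinh_p_lower_bound:
  fixes p x :: real
  assumes "p > 0" "0 < x"
  shows "arsinh_p_approx p (1 / (1 + p)) x < arsinh_p p x"
proof (rule arsinh_p_approx_less_arsinh_p[OF assms])
  fix u :: real assume "0 < u"
  with \<open>p > 0\<close> ln_add_one_self_less_self[of u]
  show "1 / (1 + p) * (ln (1 + u) + p * u) < u" by (simp add: field_simps)
qed

lemma arsinh_p_upper_bound: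
  fixes p x :: real
  assumes "p > 0" "0 < x"
  shows "arsinh_p p x < arsinh_p_approx p (1 / p) x"
proof (rule arsinh_p_less_arsinh_p_approx[OF assms])
  fix u :: real assume "0 < u"
  with \<open>p > 0\<close> show "u < 1 / p * (ln (1 + u) + p * u)" by (simp add: field_simps)
qed

lemma artanh_p_lower_bound:
  fixes p x :: real
  assumes "p > 0" "0 < x" "x < 1"
  shows "artanh_p_approx p (1 / (1 + p)) x < artanh_p p x"
proof (rule artanh_p_approx_less_artanh_p[OF assms])
  fix u :: real assume "0 < u" "u < 1"
  then have "p * u / (1 - u) - ln (1 - u) < (1 + p) * (u / (1 - u))"
    using minus_ln_one_minus_less[of u] by (simp add: add_divide_distrib distrib_right)
  with \<open>p > 0\<close> show "1 / (1 + p) * (p * u / (1 - u) - ln (1 - u)) < u / (1 - u)"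
    by (simp add: pos_divide_less_eq mult.commute)
qed

lemma artanh_p_upper_bound:
  fixes p x :: real
  assumes "p > 0" "0 < x" "x < 1"
  shows "artanh_p p x < artanh_p_approx p (1 / p) x"
proof (rule artanh_p_less_artanh_p_approx[OF assms])
  fix u :: real assume "0 < u" "u < 1"
  then have "ln (1 - u) / p < 0" using \<open>p > 0\<close> by (simp add: divide_neg_pos)
  moreover have "1 / p * (p * u / (1 - u) - ln (1 - u)) = u / (1 - u) - ln (1 - u) / p"
    using \<open>p > 0\<close> by (simp add: right_diff_distrib)
  ultimately show "u / (1 - u) < 1 / p * (p * u / (1 - u) - ln (1 - u))" by simp
qed

theorem theorem1p2:
  fixes p x :: real
  assumes "p > 1" and "0 < x" and "x < 1"
  defines "z \<equiv> (x powr p / (1 + x powr p)) powr (1 / p)"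
  shows "z * (1 + ln (1 + x powr p) / (1 + p)) < arsinh_p p x
         \<and> arsinh_p p x < z * (1 + (1 / p) * ln (1 + x powr p))
         \<and> x * (1 - (1 / (1 + p)) * ln (1 - x powr p)) < artanh_p p x
         \<and> artanh_p p x < x * (1 - (1 / p) * ln (1 - x powr p))"
proof -
  have "p > 0" using \<open>p > 1\<close> by simp
  have "0 < 1 + x powr p" by (simp add: add_pos_nonneg)
  then have "z = (x powr p) powr (1 / p) / (1 + x powr p) powr (1 / p)"
    by (simp add: z_def powr_divide)
  also have "(x powr p) powr (1 / p) = x" using \<open>p > 0\<close> \<open>0 < x\<close> by (simp add: powr_powr)
  finally have z: "z = x * (1 + x powr p) powr (-1 / p)"
    by (simp add: powr_minus_divide)
  show ?thesis
    using arsinh_p_lower_bound[of p x] arsinh_p_upper_bound[of p x]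
      artanh_p_lower_bound[of p x] artanh_p_upper_bound[of p x] \<open>p > 0\<close> assms(2,3)
    unfolding z arsinh_p_approx_def artanh_p_approx_def by (simp add: mult_ac)
qed

end
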